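(* There are absolute constants $c,c'>0$ such that the following holds for every integer $k\ge 2$. Let $H$ be an $\mathcal{O}_k$-free graph with $V(H)=L\cup R$ such that: $S=L\cap R$ is an independent set of $H$; there is no edge between $L\setminus S$ and $R\setminus S$; $H[L]$ is a disjoint union of paths whose set of endpoints is exactly $S$; and $H[R]$ is a disjoint union of subdivided stars whose set of leaves is exactly $S$ and whose centers have average degree at least $4c\,k\log k$. Then $H$ has a vertex of degree at least $c'|S|/k^2$.
   Context: All graphs are finite and simple. A subdivided star is a graph with at least two vertices obtained from a star $K_{1,m}$ ($m\ge 1$) by replacing its edges with paths of arbitrary positive length; its center is the vertex of the original star center (for a path, an internal vertex, whose degree is 2). A graph $G$ is $\mathcal{O}_k$-free if it does not contain $k$ pairwise vertex-disjoint cycles with no edges between any two of them; equivalently, it has no induced subgraph isomorphic to a disjoint union of $k$ cycles. *)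

theory Defs
  imports Main Complex_Main
begin

definition graph :: "'a set \<Rightarrow> ('a \<Rightarrow> 'a \<Rightarrow> bool) \<Rightarrow> bool" where
  "graph V E \<longleftrightarrow> finite V \<and> (\<forall>x y. E x y \<longrightarrow> x \<in> V \<and> y \<in> V \<and> E y x \<and> x \<noteq> y)"

definition degree :: "'a set \<Rightarrow> ('a \<Rightarrow> 'a \<Rightarrow> bool) \<Rightarrow> 'a \<Rightarrow> nat" where
  "degree V E v = card {u \<in> V. E v u}"

definition is_cycle :: "('a \<Rightarrow> 'a \<Rightarrow> bool) \<Rightarrow> 'a set \<Rightarrow> bool" where
  "is_cycle E C \<longleftrightarrow> (\<exists>xs. distinct xs \<and> set xs = C \<and> length xs \<ge> 3 \<and>
      (\<forall>i < length xs. E (xs ! i) (xs ! ((i + 1) mod length xs))))"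

definition O_free :: "nat \<Rightarrow> 'a set \<Rightarrow> ('a \<Rightarrow> 'a \<Rightarrow> bool) \<Rightarrow> bool" where
  "O_free k V E \<longleftrightarrow> \<not> (\<exists>Cs :: nat \<Rightarrow> 'a set.
      (\<forall>i < k. Cs i \<subseteq> V \<and> is_cycle E (Cs i)) \<and>
      (\<forall>i < k. \<forall>j < k. i \<noteq> j \<longrightarrow>
          Cs i \<inter> Cs j = {} \<and> (\<forall>x \<in> Cs i. \<forall>y \<in> Cs j. \<not> E x y)))"

definition induced_path :: "('a \<Rightarrow> 'a \<Rightarrow> bool) \<Rightarrow> 'a list \<Rightarrow> bool" where
  "induced_path E xs \<longleftrightarrow> distinct xs \<and>
     (\<forall>i < length xs. \<forall>j < length xs. E (xs ! i) (xs ! j) \<longleftrightarrow> (i + 1 = j \<or> j + 1 = i))"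

definition paths_decomp :: "('a \<Rightarrow> 'a \<Rightarrow> bool) \<Rightarrow> 'a set \<Rightarrow> 'a set \<Rightarrow> bool" where
  "paths_decomp E L S \<longleftrightarrow> (\<exists>\<P> :: 'a list set.
      (\<forall>xs \<in> \<P>. length xs \<ge> 2 \<and> induced_path E xs) \<and>
      L = (\<Union>xs \<in> \<P>. set xs) \<and>
      (\<forall>xs \<in> \<P>. \<forall>ys \<in> \<P>. xs \<noteq> ys \<longrightarrow>
          set xs \<inter> set ys = {} \<and> (\<forall>x \<in> set xs. \<forall>y \<in> set ys. \<not> E x y)) \<and>
      S = (\<Union>xs \<in> \<P>. {hd xs, last xs}))"

text \<open>Subdivided star with center c and legs: each leg l gives the path c # l.\<close>
definition star_verts :: "'a \<Rightarrow> 'a list list \<Rightarrow> 'a set" where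
  "star_verts c legs = insert c (set (concat legs))"

definition star_edge :: "'a \<Rightarrow> 'a list list \<Rightarrow> 'a \<Rightarrow> 'a \<Rightarrow> bool" where
  "star_edge c legs x y \<longleftrightarrow> (\<exists>l \<in> set legs. \<exists>i. Suc i < length (c # l) \<and>
      {x, y} = {(c # l) ! i, (c # l) ! Suc i})"

text \<open>At least two legs: a subdivided K_{1,1} is a path whose center
  is taken to be an internal vertex (degree 2), i.e. it is a star with two legs.\<close>
definition induced_sstar :: "('a \<Rightarrow> 'a \<Rightarrow> bool) \<Rightarrow> 'a \<Rightarrow> 'a list list \<Rightarrow> bool" where
  "induced_sstar E c legs \<longleftrightarrow> length legs \<ge> 2 \<and> (\<forall>l \<in> set legs. l \<noteq> []) \<and>
      distinct (c # concat legs) \<and>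
      (\<forall>x \<in> star_verts c legs. \<forall>y \<in> star_verts c legs. E x y \<longleftrightarrow> star_edge c legs x y)"

definition star_leaves :: "'a list list \<Rightarrow> 'a set" where
  "star_leaves legs = last ` set legs"

definition stars_decomp ::
  "('a \<Rightarrow> 'a \<Rightarrow> bool) \<Rightarrow> 'a set \<Rightarrow> 'a set \<Rightarrow> ('a \<times> 'a list list) set \<Rightarrow> bool" where
  "stars_decomp E R S \<Sigma> \<longleftrightarrow>
      (\<forall>(c, legs) \<in> \<Sigma>. induced_sstar E c legs) \<and>
      R = (\<Union>(c, legs) \<in> \<Sigma>. star_verts c legs) \<and>
      (\<forall>(c, legs) \<in> \<Sigma>. \<forall>(d, legs') \<in> \<Sigma>. (c, legs) \<noteq> (d, legs') \<longrightarrow>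
          star_verts c legs \<inter> star_verts d legs' = {} \<and>
          (\<forall>x \<in> star_verts c legs. \<forall>y \<in> star_verts d legs'. \<not> E x y)) \<and>
      S = (\<Union>(c, legs) \<in> \<Sigma>. star_leaves legs)"

end

theory Submission
  imports Defs
begin

text \<open>Contract every subdivided star of \<open>H[R]\<close> to a vertex.  The paths of \<open>H[L]\<close> become the
  edges of a multigraph on the \<open>n\<close> stars with \<open>|S|/2\<close> edges, in which the degree of a star is
  the degree of its centre; let \<open>D\<close> be the maximum.  A multigraph with more than
  \<open>n + (k - 1)(2n + 2D)\<close> edges has \<open>k\<close> disjoint vertex sets each spanning at least as many edges
  as vertices: such a set can always be found so that at most \<open>2n + 2D\<close> edges touch it, so it can
  be split off \<open>k\<close> times.  Each of these sets contains a submultigraph of minimum degree two, and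
  the centres, paths and legs realising it in \<open>H\<close> form a subgraph of minimum degree two, hence
  contain a cycle.  Since every vertex and every edge of \<open>H\<close> lies in a single star or a single
  path, the \<open>k\<close> cycles are disjoint and have no edges between them.  So an \<open>O\<^sub>k\<close>-free \<open>H\<close> has
  \<open>|S| \<le> 4kn + 4kD\<close>, and an average centre degree \<open>|S|/n \<ge> 12 k ln k \<ge> 6k\<close> forces
  \<open>D \<ge> |S|/(12k)\<close>.\<close>

section \<open>Cycles in graphs of minimum degree two\<close>

abbreviation two_neighbours_in :: "('a \<Rightarrow> 'a \<Rightarrow> bool) \<Rightarrow> 'a set \<Rightarrow> 'a \<Rightarrow> bool" where
  "two_neighbours_in E Y v \<equiv> \<exists>u\<in>Y. \<exists>w\<in>Y. u \<noteq> w \<and> E v u \<and> E v w"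

definition path_in :: "('a \<Rightarrow> 'a \<Rightarrow> bool) \<Rightarrow> 'a set \<Rightarrow> 'a list \<Rightarrow> bool" where
  "path_in E Y xs \<longleftrightarrow> distinct xs \<and> set xs \<subseteq> Y \<and> (\<forall>i. Suc i < length xs \<longrightarrow> E (xs ! i) (xs ! Suc i))"

lemma path_in_snoc:
  assumes "path_in E Y xs" and "t \<in> Y" "t \<notin> set xs" and "xs \<noteq> []" "E (last xs) t"
  shows "path_in E Y (xs @ [t])"
  unfolding path_in_def
proof (intro conjI allI impI)
  show "distinct (xs @ [t])" "set (xs @ [t]) \<subseteq> Y" using assms unfolding path_in_def by auto
  fix i assume i: "Suc i < length (xs @ [t])"
  show "E ((xs @ [t]) ! i) ((xs @ [t]) ! Suc i)"
  proof (cases "Suc i < length xs")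
    case True
    then show ?thesis using assms(1) unfolding path_in_def by (simp add: nth_append)
  next
    case False
    then have "i = length xs - 1" using i by simp
    then show ?thesis using assms(4,5) by (simp add: nth_append last_conv_nth)
  qed
qed

lemma path_in_chord_cycle:
  assumes "path_in E Y xs" and "i + 2 < length xs" and "E (last xs) (xs ! i)"
  shows "is_cycle E (set (drop i xs))"
  unfolding is_cycle_def
proof (intro exI[of _ "drop i xs"] conjI allI impI)
  let ?ys = "drop i xs"
  show "distinct ?ys" using assms(1) unfolding path_in_def by simp
  show "3 \<le> length ?ys" using assms(2) by simp
  fix m assume m: "m < length ?ys"
  show "E (?ys ! m) (?ys ! ((m + 1) mod length ?ys))"
  proof (cases "Suc m < length ?ys")
    case True
    then show ?thesis using assms(1) unfolding path_in_def by (simp add: add.commute)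
  next
    case False
    then have "m + 1 = length ?ys" using m by simp
    then have "i + m = length xs - 1" and "xs \<noteq> []" using assms(2) by auto
    then have "?ys ! m = last xs" using assms(2) by (simp add: last_conv_nth)
    moreover have "(m + 1) mod length ?ys = 0" using \<open>m + 1 = length ?ys\<close> by simp
    ultimately show ?thesis using assms(2,3) by simp
  qed
qed simp

text \<open>Without a cycle, the end vertex of every path in \<open>Y\<close> has a neighbour in \<open>Y\<close> off the path:
  at most one of its two neighbours is its predecessor, and any other one on the path would close
  a cycle.  So \<open>Y\<close> would contain arbitrarily long paths.\<close>
lemma min_degree_two_has_cycle:
  assumes irr: "\<And>x. \<not> E x x" and fin: "finite Y" and ne: "Y \<noteq> {}"
    and deg2: "\<And>v. v \<in> Y \<Longrightarrow> two_neighbours_in E Y v"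
  shows "\<exists>C \<subseteq> Y. is_cycle E C"
proof (rule ccontr)
  assume acyclic: "\<not> (\<exists>C \<subseteq> Y. is_cycle E C)"
  have "\<exists>xs. path_in E Y xs \<and> length xs = Suc n" for n
  proof (induction n)
    case 0
    from ne obtain v where "v \<in> Y" by blast
    then show ?case by (intro exI[of _ "[v]"]) (simp add: path_in_def)
  next
    case (Suc n)
    then obtain xs where xs: "path_in E Y xs" and len: "length xs = Suc n" by blast
    have "xs \<noteq> []" using len by auto
    then have "last xs \<in> Y" using xs unfolding path_in_def by auto
    then obtain u w where "u \<in> Y" "w \<in> Y" "u \<noteq> w" "E (last xs) u" "E (last xs) w"
      using deg2 by blast
    then obtain t where t: "t \<in> Y" "E (last xs) t" "t \<noteq> xs ! (n - 1)" by metis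
    show ?case
    proof (cases "t \<in> set xs")
      case False
      then show ?thesis using path_in_snoc[OF xs t(1) False \<open>xs \<noteq> []\<close> t(2)] len by auto
    next
      case True
      then obtain i where i: "i < length xs" "t = xs ! i" by (metis in_set_conv_nth)
      have "t \<noteq> last xs" using t(2) irr by blast
      then have "i \<noteq> n" using i(2) len \<open>xs \<noteq> []\<close> by (auto simp: last_conv_nth)
      then have "i + 2 < length xs" using i t(3) len by (cases "i = n - 1") auto
      then have "is_cycle E (set (drop i xs))" using path_in_chord_cycle xs t(2) i(2) by blast
      moreover have "set (drop i xs) \<subseteq> Y" using xs set_drop_subset unfolding path_in_def by fast
      ultimately show ?thesis using acyclic by blast
    qed
  qed
  then obtain xs where "path_in E Y xs" "length xs = Suc (card Y)" by blast
  then show False using fin unfolding path_in_def by (metis card_mono distinct_card lessI not_less)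
qed

section \<open>Disjoint dense subsets of multigraphs\<close>

locale multigraph =
  fixes P :: "'p set" and a b :: "'p \<Rightarrow> 'n"
  assumes finite_edges: "finite P"
begin

definition inner_edges :: "'n set \<Rightarrow> nat" where
  "inner_edges X = card {p\<in>P. a p \<in> X \<and> b p \<in> X}"

definition touching_edges :: "'n set \<Rightarrow> 'n set \<Rightarrow> nat" where
  "touching_edges N X = card {p\<in>P. a p \<in> N \<and> b p \<in> N \<and> (a p \<in> X \<or> b p \<in> X)}"

definition mdegree :: "'n \<Rightarrow> nat" where
  "mdegree x = card {p\<in>P. a p = x \<or> b p = x}"

definition edges_into :: "'n \<Rightarrow> 'n set \<Rightarrow> 'p set" where
  "edges_into y X = {p\<in>P. (a p = y \<and> b p \<in> X) \<or> (b p = y \<and> a p \<in> X)}"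

text \<open>A loop at \<open>x\<close> counts twice.\<close>
definition mdegree_in :: "'n set \<Rightarrow> 'n \<Rightarrow> nat" where
  "mdegree_in Q x = card {p\<in>P. a p = x \<and> b p \<in> Q} + card {p\<in>P. b p = x \<and> a p \<in> Q}"

definition dense :: "'n set \<Rightarrow> bool" where
  "dense Q \<longleftrightarrow> Q \<noteq> {} \<and> card Q \<le> inner_edges Q"

text \<open>The motivating example is a tree to which every other vertex of \<open>N\<close> sends at most one
  edge; only the edge count of a tree is used.\<close>
definition tree_block :: "'n set \<Rightarrow> 'n set \<Rightarrow> bool" where
  "tree_block N X \<longleftrightarrow> X \<subseteq> N \<and> X \<noteq> {} \<and> inner_edges X + 1 = card X \<and>
     (\<forall>y\<in>N - X. card (edges_into y X) \<le> 1)"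

lemma inner_edges_insert:
  assumes "y \<notin> X"
  shows "inner_edges X + card (edges_into y X) \<le> inner_edges (insert y X)"
proof -
  have "card ({p\<in>P. a p \<in> X \<and> b p \<in> X} \<union> edges_into y X) = inner_edges X + card (edges_into y X)"
    unfolding inner_edges_def using assms finite_edges
    by (subst card_Un_disjoint) (auto simp: edges_into_def)
  moreover have "card ({p\<in>P. a p \<in> X \<and> b p \<in> X} \<union> edges_into y X) \<le> inner_edges (insert y X)"
    unfolding inner_edges_def using finite_edges by (intro card_mono) (auto simp: edges_into_def)
  ultimately show ?thesis by simp
qed

lemma touching_edges_insert: "touching_edges N (insert y X) \<le> touching_edges N X + mdegree y"
proof -
  have "touching_edges N (insert y X) \<le>
      card ({p\<in>P. a p \<in> N \<and> b p \<in> N \<and> (a p \<in> X \<or> b p \<in> X)} \<union> {p\<in>P. a p = y \<or> b p = y})"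
    unfolding touching_edges_def using finite_edges by (intro card_mono) auto
  also have "\<dots> \<le> touching_edges N X + mdegree y"
    unfolding touching_edges_def mdegree_def by (rule card_Un_le)
  finally show ?thesis .
qed

lemma touching_edges_singleton: "touching_edges N {y} \<le> mdegree y"
  unfolding touching_edges_def mdegree_def using finite_edges by (intro card_mono) auto

lemma inner_edges_split:
  assumes "X \<subseteq> N"
  shows "inner_edges N = inner_edges (N - X) + touching_edges N X"
proof -
  have "{p\<in>P. a p \<in> N \<and> b p \<in> N} = {p\<in>P. a p \<in> N - X \<and> b p \<in> N - X} \<union>
      {p\<in>P. a p \<in> N \<and> b p \<in> N \<and> (a p \<in> X \<or> b p \<in> X)}"
    by auto
  then show ?thesis
    unfolding inner_edges_def touching_edges_def using assms finite_edges
    by (simp add: card_Un_disjoint disjoint_iff)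
qed

lemma touching_edges_tree_block:
  assumes "finite N" and "tree_block N X"
  shows "touching_edges N X \<le> 2 * card N"
proof -
  have XN: "X \<subseteq> N" and e: "inner_edges X + 1 = card X"
    and into: "\<forall>y\<in>N - X. card (edges_into y X) \<le> 1"
    using assms(2) unfolding tree_block_def by auto
  define Cr where "Cr = {p\<in>P. a p \<in> N \<and> b p \<in> N \<and> (a p \<in> X \<longleftrightarrow> b p \<notin> X)}"
  define f where "f p = (if a p \<in> X then b p else a p)" for p
  \<comment> \<open>an edge leaving \<open>X\<close> is determined by its outer end\<close>
  have "inj_on f Cr"
  proof (rule inj_onI)
    fix p q assume p: "p \<in> Cr" and q: "q \<in> Cr" and fpq: "f p = f q"
    have "f p \<in> N - X" using p unfolding Cr_def f_def by auto
    moreover have "{p, q} \<subseteq> edges_into (f p) X"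
      using p q fpq unfolding Cr_def f_def edges_into_def by (auto split: if_splits)
    then have "card {p, q} \<le> card (edges_into (f p) X)"
      using finite_edges by (intro card_mono) (auto simp: edges_into_def)
    ultimately have "card {p, q} \<le> 1" using into by (meson order_trans)
    then show "p = q" by (cases "p = q") auto
  qed
  moreover have "f ` Cr \<subseteq> N - X" unfolding Cr_def f_def by auto
  ultimately have "card Cr \<le> card (N - X)"
    using assms(1) by (metis card_inj_on_le finite_Diff)
  have "touching_edges N X \<le> card ({p\<in>P. a p \<in> X \<and> b p \<in> X} \<union> Cr)"
    unfolding touching_edges_def Cr_def using XN finite_edges by (intro card_mono) auto
  also have "\<dots> \<le> inner_edges X + card Cr" unfolding inner_edges_def by (rule card_Un_le)
  also have "\<dots> \<le> card X + card (N - X)" using \<open>card Cr \<le> card (N - X)\<close> e by simp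
  also have "\<dots> \<le> 2 * card N"
    using XN assms(1) card_mono[OF assms(1) XN] by (simp add: card_Diff_subset finite_subset)
  finally show ?thesis .
qed

lemma dense_at_non_tree_vertex:
  assumes "x \<in> N" and "\<not> tree_block N {x}" and deg: "\<forall>v\<in>N. mdegree v \<le> D"
  shows "\<exists>Q\<subseteq>N. dense Q \<and> touching_edges N Q \<le> 2 * D"
proof (cases "inner_edges {x} = 0")
  case False
  moreover have "touching_edges N {x} \<le> D"
    using touching_edges_singleton[of N x] deg assms(1) by (meson order_trans)
  ultimately show ?thesis using assms(1) by (intro exI[of _ "{x}"]) (auto simp: dense_def)
next
  case True
  then have "\<not> (\<forall>y\<in>N - {x}. card (edges_into y {x}) \<le> 1)"
    using assms(1,2) unfolding tree_block_def by simp
  then obtain y where y: "y \<in> N - {x}" and "\<not> card (edges_into y {x}) \<le> 1"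
    by blast
  then have two: "2 \<le> card (edges_into y {x})" by simp
  have "card {y, x} \<le> inner_edges {y, x}"
    using inner_edges_insert[of y "{x}"] y two True by auto
  moreover have "touching_edges N {y, x} \<le> 2 * D"
  proof -
    have "mdegree x \<le> D" "mdegree y \<le> D" using deg assms(1) y by auto
    then show ?thesis
      using touching_edges_insert[of N y "{x}"] touching_edges_singleton[of N x] by linarith
  qed
  ultimately show ?thesis using assms(1) y by (intro exI[of _ "{y, x}"]) (auto simp: dense_def)
qed

text \<open>Adding a neighbour \<open>y\<close> to a maximal tree block either makes it dense, or gives a set with
  the edge count of a tree that by maximality is not a block, so that some \<open>z\<close> sends two edges into
  it and adding \<open>z\<close> makes it dense.  Each added vertex adds at most \<open>D\<close> touching edges.\<close>
lemma dense_next_to_tree_block: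
  assumes finN: "finite N" and X: "tree_block N X"
    and max: "\<And>Z. tree_block N Z \<Longrightarrow> card Z \<le> card X"
    and y: "y \<in> N - X" and yX: "edges_into y X \<noteq> {}"
    and deg: "\<forall>v\<in>N. mdegree v \<le> D"
  shows "\<exists>Q\<subseteq>N. dense Q \<and> touching_edges N Q \<le> 2 * card N + 2 * D"
proof -
  have XN: "X \<subseteq> N" and eX: "inner_edges X + 1 = card X" using X unfolding tree_block_def by auto
  have finX: "finite X" using XN finN finite_subset by blast
  let ?Y = "insert y X"
  have YN: "?Y \<subseteq> N" and cY: "card ?Y = Suc (card X)" using XN y finX by auto
  have "card (edges_into y X) \<ge> 1"
    using yX finite_edges unfolding edges_into_def by (simp add: Suc_leI card_gt_0_iff)
  then have eY: "card X \<le> inner_edges ?Y" using inner_edges_insert[of y X] y eX by simp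
  have tY: "touching_edges N ?Y \<le> 2 * card N + D"
    using touching_edges_insert[of N y X] touching_edges_tree_block[OF finN X] deg y by fastforce
  show ?thesis
  proof (cases "card ?Y \<le> inner_edges ?Y")
    case True
    then show ?thesis using tY YN by (intro exI[of _ ?Y]) (auto simp: dense_def)
  next
    case False
    then have eY': "inner_edges ?Y + 1 = card ?Y" using eY cY by simp
    have "\<not> tree_block N ?Y" using max[of ?Y] cY by auto
    then obtain z where z: "z \<in> N - ?Y" and two: "2 \<le> card (edges_into z ?Y)"
      using YN eY' unfolding tree_block_def by fastforce
    let ?Z = "insert z ?Y"
    have "card ?Z \<le> inner_edges ?Z"
      using inner_edges_insert[of z ?Y] eY' two z finX by simp
    moreover have "touching_edges N ?Z \<le> 2 * card N + 2 * D"
      using touching_edges_insert[of N z ?Y] tY deg z by fastforce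
    ultimately show ?thesis using z YN by (intro exI[of _ ?Z]) (auto simp: dense_def)
  qed
qed

lemma isolated_subset_edges:
  assumes "X \<subseteq> N" and iso: "\<forall>y\<in>N - X. edges_into y X = {}"
  shows inner_edges_isolated: "inner_edges N = inner_edges (N - X) + inner_edges X"
    and touching_edges_isolated: "Q \<subseteq> N - X \<Longrightarrow> touching_edges N Q = touching_edges (N - X) Q"
proof -
  have side: "a p \<in> X \<longleftrightarrow> b p \<in> X" if "p \<in> P" "a p \<in> N" "b p \<in> N" for p
    using iso that unfolding edges_into_def by blast
  have "{p\<in>P. a p \<in> N \<and> b p \<in> N \<and> (a p \<in> X \<or> b p \<in> X)} = {p\<in>P. a p \<in> X \<and> b p \<in> X}"
    using side assms(1) by blast
  then show "inner_edges N = inner_edges (N - X) + inner_edges X"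
    using inner_edges_split[OF assms(1)] unfolding touching_edges_def inner_edges_def by simp
  assume "Q \<subseteq> N - X"
  then have "{p\<in>P. a p \<in> N \<and> b p \<in> N \<and> (a p \<in> Q \<or> b p \<in> Q)} =
      {p\<in>P. a p \<in> N - X \<and> b p \<in> N - X \<and> (a p \<in> Q \<or> b p \<in> Q)}"
    using side by blast
  then show "touching_edges N Q = touching_edges (N - X) Q" unfolding touching_edges_def by simp
qed

lemma dense_subset_few_touching_edges:
  assumes "finite N" and "\<forall>v\<in>N. mdegree v \<le> D" and "card N < inner_edges N"
  shows "\<exists>Q\<subseteq>N. dense Q \<and> touching_edges N Q \<le> 2 * card N + 2 * D"
  using assms
proof (induction "card N" arbitrary: N rule: less_induct)
  case less
  note finN = less.prems(1) and deg = less.prems(2) and many = less.prems(3)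
  have "N \<noteq> {}" using many unfolding inner_edges_def by auto
  then obtain x where x: "x \<in> N" by blast
  show ?case
  proof (cases "tree_block N {x}")
    case False
    then obtain Q where "Q \<subseteq> N" "dense Q" "touching_edges N Q \<le> 2 * D"
      using dense_at_non_tree_vertex[OF x _ deg] by blast
    moreover have "2 * D \<le> 2 * card N + 2 * D" by simp
    ultimately show ?thesis by (meson order_trans)
  next
    case True
    have "\<forall>Z. tree_block N Z \<longrightarrow> card Z < Suc (card N)"
      using finN unfolding tree_block_def by (simp add: card_mono less_Suc_eq_le)
    then obtain X where X: "tree_block N X" and max: "\<And>Z. tree_block N Z \<Longrightarrow> card Z \<le> card X"
      using ex_has_greatest_nat[of "tree_block N" "{x}" card] True by blast
    have XN: "X \<subseteq> N" and eX: "inner_edges X + 1 = card X" and Xne: "X \<noteq> {}"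
      using X unfolding tree_block_def by auto
    show ?thesis
    proof (cases "\<exists>y\<in>N - X. edges_into y X \<noteq> {}")
      case True
      then show ?thesis using dense_next_to_tree_block[OF finN X max _ _ deg] by blast
    next
      case False
      then have iso: "\<forall>y\<in>N - X. edges_into y X = {}" by blast
      have finX: "finite X" using XN finN finite_subset by blast
      have cNX: "card (N - X) = card N - card X" using finX XN by (simp add: card_Diff_subset)
      have "card X \<le> card N" "0 < card X" using XN finN finX Xne by (auto simp: card_mono card_gt_0_iff)
      then have less: "card (N - X) < card N"
        and many': "card (N - X) < inner_edges (N - X)"
        using cNX many eX inner_edges_isolated[OF XN iso] by linarith+
      obtain Q where Q: "Q \<subseteq> N - X" "dense Q"
        and few: "touching_edges (N - X) Q \<le> 2 * card (N - X) + 2 * D"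
        using less.hyps[OF less _ _ many'] finN deg by (meson DiffD1 finite_Diff)
      have "touching_edges N Q \<le> 2 * card N + 2 * D"
        using few touching_edges_isolated[OF XN iso Q(1)] less by linarith
      then show ?thesis using Q by blast
    qed
  qed
qed

lemma disjoint_dense_subsets:
  assumes finN0: "finite N0" and deg: "\<forall>v\<in>N0. mdegree v \<le> D"
    and "N \<subseteq> N0" and "card N + j * (2 * card N0 + 2 * D) < inner_edges N"
  shows "\<exists>Qs. (\<forall>i\<le>j. Qs i \<subseteq> N \<and> dense (Qs i)) \<and> (\<forall>i\<le>j. \<forall>i'\<le>j. i \<noteq> i' \<longrightarrow> Qs i \<inter> Qs i' = {})"
  using assms(3,4)
proof (induction j arbitrary: N)
  case (0 N)
  have "finite N" using finN0 0(1) by (rule finite_subset[rotated])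
  moreover have "\<forall>v\<in>N. mdegree v \<le> D" using deg 0(1) by blast
  moreover have "card N < inner_edges N" using 0(2) by simp
  ultimately obtain Q where "Q \<subseteq> N" "dense Q"
    by (blast dest: dense_subset_few_touching_edges)
  then show ?case by (intro exI[of _ "\<lambda>_. Q"]) simp
next
  case (Suc j N)
  have finN: "finite N" using finN0 Suc.prems(1) by (rule finite_subset[rotated])
  moreover have "\<forall>v\<in>N. mdegree v \<le> D" using deg Suc.prems(1) by blast
  moreover have "card N < inner_edges N" using Suc.prems(2) by linarith
  ultimately obtain Q where QN: "Q \<subseteq> N" and Q: "dense Q"
    and few: "touching_edges N Q \<le> 2 * card N + 2 * D"
    by (blast dest: dense_subset_few_touching_edges)
  have "card (N - Q) \<le> card N" using finN by (rule card_mono) blast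
  moreover have "card N \<le> card N0" using finN0 Suc.prems(1) by (rule card_mono)
  moreover have "Suc j * (2 * card N0 + 2 * D) = (2 * card N0 + 2 * D) + j * (2 * card N0 + 2 * D)"
    by simp
  ultimately have many: "card (N - Q) + j * (2 * card N0 + 2 * D) < inner_edges (N - Q)"
    using Suc.prems(2) inner_edges_split[OF QN] few by linarith
  have "N - Q \<subseteq> N0" using Suc.prems(1) by blast
  then obtain Qs where Qs: "\<forall>i\<le>j. Qs i \<subseteq> N - Q \<and> dense (Qs i)"
    and disj: "\<forall>i\<le>j. \<forall>i'\<le>j. i \<noteq> i' \<longrightarrow> Qs i \<inter> Qs i' = {}"
    using Suc.IH[OF _ many] by blast
  define Qs' where "Qs' = Qs(Suc j := Q)"
  have "\<forall>i\<le>Suc j. Qs' i \<subseteq> N \<and> dense (Qs' i)"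
    using Qs QN Q unfolding Qs'_def by (auto simp: le_Suc_eq)
  moreover have "\<forall>i\<le>Suc j. \<forall>i'\<le>Suc j. i \<noteq> i' \<longrightarrow> Qs' i \<inter> Qs' i' = {}"
    using Qs disj unfolding Qs'_def by (auto simp: le_Suc_eq)
  ultimately show ?case by (intro exI[of _ Qs'] conjI)
qed

lemma dense_has_min_degree_two_subset:
  assumes "finite Q" and "dense Q"
  shows "\<exists>Q'\<subseteq>Q. Q' \<noteq> {} \<and> (\<forall>x\<in>Q'. 2 \<le> mdegree_in Q' x)"
  using assms
proof (induction "card Q" arbitrary: Q rule: less_induct)
  case less
  show ?case
  proof (cases "\<forall>x\<in>Q. 2 \<le> mdegree_in Q x")
    case True
    then show ?thesis using less.prems(2) unfolding dense_def by blast
  next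
    case False
    then obtain x where x: "x \<in> Q" and dx: "mdegree_in Q x \<le> 1" by auto
    let ?A = "{p\<in>P. a p = x \<and> b p \<in> Q}" and ?B = "{p\<in>P. b p = x \<and> a p \<in> Q}"
    have "inner_edges Q \<le> card ({p\<in>P. a p \<in> Q - {x} \<and> b p \<in> Q - {x}} \<union> (?A \<union> ?B))"
      unfolding inner_edges_def using finite_edges by (intro card_mono) auto
    also have "\<dots> \<le> inner_edges (Q - {x}) + (card ?A + card ?B)"
      unfolding inner_edges_def by (meson add_le_mono card_Un_le le_trans order_refl)
    finally have "inner_edges Q \<le> inner_edges (Q - {x}) + 1"
      using dx unfolding mdegree_in_def by simp
    moreover have "card (Q - {x}) = card Q - 1" using x less.prems(1) by simp
    ultimately have "card (Q - {x}) \<le> inner_edges (Q - {x})"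
      using less.prems(2) unfolding dense_def by linarith
    moreover have "Q - {x} \<noteq> {}"
    proof
      assume "Q - {x} = {}"
      then have "Q = {x}" using x by blast
      then have "card {p\<in>P. a p \<in> {x} \<and> b p \<in> {x}} \<noteq> 0"
        using less.prems(2) unfolding dense_def inner_edges_def by simp
      then obtain p where "p \<in> P" "a p = x" "b p = x"
        by (metis (mono_tags, lifting) card.empty empty_Collect_eq singletonD)
      then have "p \<in> ?A" "p \<in> ?B" using x by auto
      then have "card ?A \<ge> 1" "card ?B \<ge> 1"
        using finite_edges by (auto simp: Suc_le_eq card_gt_0_iff)
      then show False using dx unfolding mdegree_in_def by simp
    qed
    moreover have "card (Q - {x}) < card Q" using x less.prems(1) by (rule card_Diff1_less[rotated])
    ultimately show ?thesis
      using less.hyps[of "Q - {x}"] less.prems(1) unfolding dense_def by blast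
  qed
qed

theorem disjoint_min_degree_two_subsets:
  assumes finN: "finite N" and deg: "\<forall>v\<in>N. mdegree v \<le> D"
    and many: "card N + (k - 1) * (2 * card N + 2 * D) < inner_edges N"
  shows "\<exists>Qs. (\<forall>i<k. Qs i \<subseteq> N \<and> Qs i \<noteq> {} \<and> (\<forall>x\<in>Qs i. 2 \<le> mdegree_in (Qs i) x)) \<and>
    (\<forall>i<k. \<forall>j<k. i \<noteq> j \<longrightarrow> Qs i \<inter> Qs j = {})"
proof -
  obtain Qs where Qs: "\<forall>i\<le>k - 1. Qs i \<subseteq> N \<and> dense (Qs i)"
    and disj: "\<forall>i\<le>k - 1. \<forall>i'\<le>k - 1. i \<noteq> i' \<longrightarrow> Qs i \<inter> Qs i' = {}"
    using disjoint_dense_subsets[OF finN deg order_refl many] by blast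
  have le: "i \<le> k - 1" if "i < k" for i using that by simp
  have "\<exists>Q'. i < k \<longrightarrow> Q' \<subseteq> Qs i \<and> Q' \<noteq> {} \<and> (\<forall>x\<in>Q'. 2 \<le> mdegree_in Q' x)" for i
  proof (cases "i < k")
    case True
    then have "Qs i \<subseteq> N" and "dense (Qs i)" using Qs le by auto
    moreover from \<open>Qs i \<subseteq> N\<close> have "finite (Qs i)" using finN by (rule finite_subset)
    ultimately show ?thesis using dense_has_min_degree_two_subset[of "Qs i"] by blast
  qed simp
  then obtain Cs where Cs: "\<And>i. i < k \<Longrightarrow> Cs i \<subseteq> Qs i \<and> Cs i \<noteq> {} \<and> (\<forall>x\<in>Cs i. 2 \<le> mdegree_in (Cs i) x)"
    by metis
  have "Cs i \<subseteq> N" if "i < k" for i using Cs[OF that] Qs le[OF that] by blast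
  moreover have "Cs i \<inter> Cs j = {}" if "i < k" "j < k" "i \<noteq> j" for i j
    using Cs[OF that(1)] Cs[OF that(2)] disj le[OF that(1)] le[OF that(2)] that(3) by blast
  ultimately show ?thesis using Cs by (intro exI[of _ Cs]) blast
qed

end

section \<open>Graphs glued from paths and subdivided stars\<close>

lemma center_in_star_verts: "c \<in> star_verts c legs"
  unfolding star_verts_def by simp

lemma leg_subset_star_verts: "l \<in> set legs \<Longrightarrow> set l \<subseteq> star_verts c legs"
  unfolding star_verts_def by auto

text \<open>The decomposition of \<open>H[L]\<close> into paths is fixed as \<open>P\<close>.\<close>
locale paths_and_stars =
  fixes V :: "'a set" and E :: "'a \<Rightarrow> 'a \<Rightarrow> bool" and L R S :: "'a set"
    and P :: "'a list set" and \<Sigma> :: "('a \<times> 'a list list) set"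
  assumes graph: "graph V E" and V_eq: "V = L \<union> R" and S_eq: "S = L \<inter> R"
    and no_cross_edges: "\<forall>x\<in>L - S. \<forall>y\<in>R - S. \<not> E x y"
    and paths: "\<forall>xs\<in>P. 2 \<le> length xs \<and> induced_path E xs"
    and L_eq: "L = (\<Union>xs\<in>P. set xs)"
    and paths_apart: "\<forall>xs\<in>P. \<forall>ys\<in>P. xs \<noteq> ys \<longrightarrow>
      set xs \<inter> set ys = {} \<and> (\<forall>x\<in>set xs. \<forall>y\<in>set ys. \<not> E x y)"
    and S_ends: "S = (\<Union>xs\<in>P. {hd xs, last xs})"
    and stars: "stars_decomp E R S \<Sigma>"
begin

lemma finite_V: "finite V" and E_sym: "E x y \<Longrightarrow> E y x" and E_irrefl: "\<not> E x x"
  and E_in_V: "E x y \<Longrightarrow> x \<in> V \<and> y \<in> V"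
  using graph unfolding graph_def by blast+

abbreviation verts :: "'a \<times> 'a list list \<Rightarrow> 'a set" where
  "verts \<sigma> \<equiv> star_verts (fst \<sigma>) (snd \<sigma>)"

lemma star_induced: "(c, legs) \<in> \<Sigma> \<Longrightarrow> induced_sstar E c legs"
  using stars unfolding stars_decomp_def by blast

lemma R_eq: "R = (\<Union>\<sigma>\<in>\<Sigma>. verts \<sigma>)"
  using stars unfolding stars_decomp_def by (auto simp: case_prod_beta)

lemma stars_apart:
  assumes "\<sigma> \<in> \<Sigma>" "\<tau> \<in> \<Sigma>" "\<sigma> \<noteq> \<tau>"
  shows "verts \<sigma> \<inter> verts \<tau> = {} \<and> (\<forall>x\<in>verts \<sigma>. \<forall>y\<in>verts \<tau>. \<not> E x y)"
  using stars assms unfolding stars_decomp_def by (auto simp: case_prod_beta prod_eq_iff)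

lemma S_leaves: "S = (\<Union>\<sigma>\<in>\<Sigma>. star_leaves (snd \<sigma>))"
  using stars unfolding stars_decomp_def by (auto simp: case_prod_beta)

lemma verts_subset_R: "\<sigma> \<in> \<Sigma> \<Longrightarrow> verts \<sigma> \<subseteq> R"
  using R_eq by auto

lemma star_unique: "\<sigma> \<in> \<Sigma> \<Longrightarrow> \<tau> \<in> \<Sigma> \<Longrightarrow> x \<in> verts \<sigma> \<Longrightarrow> x \<in> verts \<tau> \<Longrightarrow> \<sigma> = \<tau>"
  using stars_apart by blast

context
  fixes c legs assumes star: "(c, legs) \<in> \<Sigma>"
begin

lemma leg_nonempty: "l \<in> set legs \<Longrightarrow> l \<noteq> []"
  using star_induced[OF star] unfolding induced_sstar_def by blast

lemma distinct_star: "distinct (c # concat legs)"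
  using star_induced[OF star] unfolding induced_sstar_def by blast

lemma distinct_center_leg: "l \<in> set legs \<Longrightarrow> distinct (c # l)"
  using distinct_star by (auto simp: distinct_concat_iff)

lemma legs_disjoint: "l1 \<in> set legs \<Longrightarrow> l2 \<in> set legs \<Longrightarrow> l1 \<noteq> l2 \<Longrightarrow> set l1 \<inter> set l2 = {}"
  using distinct_star by (auto simp: distinct_concat_iff)

lemma star_edge_iff:
  "x \<in> star_verts c legs \<Longrightarrow> y \<in> star_verts c legs \<Longrightarrow> E x y \<longleftrightarrow> star_edge c legs x y"
  using star_induced[OF star] unfolding induced_sstar_def by blast

lemma leg_pred_in_verts: "l \<in> set legs \<Longrightarrow> j < length l \<Longrightarrow> (c # l) ! j \<in> star_verts c legs"
  using center_in_star_verts leg_subset_star_verts by (cases j) fastforce+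

lemma edge_along_leg:
  assumes l: "l \<in> set legs" and j: "j < length l"
  shows "E ((c # l) ! j) (l ! j)"
proof -
  have "star_edge c legs ((c # l) ! j) (l ! j)"
    unfolding star_edge_def using l j by (intro bexI[of _ l] exI[of _ j]) auto
  moreover have "l ! j \<in> star_verts c legs" using leg_subset_star_verts[OF l] j by (meson nth_mem subsetD)
  ultimately show ?thesis using star_edge_iff leg_pred_in_verts[OF l j] by blast
qed

lemma edge_center_hd: "l \<in> set legs \<Longrightarrow> E c (hd l)"
  using edge_along_leg[of l 0] leg_nonempty by (simp add: hd_conv_nth)

lemma inj_on_hd_legs: "inj_on hd (set legs)"
  by (rule inj_onI) (metis disjoint_iff hd_in_set legs_disjoint leg_nonempty)

lemma inj_on_last_legs: "inj_on last (set legs)"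
  by (rule inj_onI) (metis disjoint_iff last_in_set legs_disjoint leg_nonempty)

lemma leaves_subset_verts: "star_leaves legs \<subseteq> star_verts c legs"
  unfolding star_leaves_def star_verts_def using leg_nonempty by auto

end

definition star_of_leaf :: "'a \<Rightarrow> 'a \<times> 'a list list" where
  "star_of_leaf s = (SOME \<sigma>. \<sigma> \<in> \<Sigma> \<and> s \<in> star_leaves (snd \<sigma>))"

lemma star_of_leaf:
  assumes "s \<in> S" shows "star_of_leaf s \<in> \<Sigma> \<and> s \<in> star_leaves (snd (star_of_leaf s))"
  unfolding star_of_leaf_def using S_leaves assms by - (rule someI_ex, blast)

lemma star_of_leaf_eq:
  assumes "\<sigma> \<in> \<Sigma>" "s \<in> verts \<sigma>" "s \<in> S"
  shows "star_of_leaf s = \<sigma>"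
proof -
  have "star_of_leaf s \<in> \<Sigma>" and "s \<in> verts (star_of_leaf s)"
    using star_of_leaf[OF assms(3)] leaves_subset_verts[of "fst (star_of_leaf s)" "snd (star_of_leaf s)"]
    by auto
  then show ?thesis using star_unique assms(1,2) by blast
qed

lemma leaf_is_last:
  assumes star: "(c, legs) \<in> \<Sigma>" and l: "l \<in> set legs" and x: "x \<in> set l" and "x \<in> S"
  shows "x = last l"
proof -
  have "star_of_leaf x = (c, legs)"
    using star_of_leaf_eq[OF star] leg_subset_star_verts[OF l] x \<open>x \<in> S\<close> by auto
  then obtain l' where l': "l' \<in> set legs" "x = last l'"
    using star_of_leaf[OF \<open>x \<in> S\<close>] unfolding star_leaves_def by auto
  then have "l = l'" using legs_disjoint[OF star l l'(1)] leg_nonempty[OF star] x by fastforce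
  then show ?thesis using l' by simp
qed

lemma center_notin_S:
  assumes star: "(c, legs) \<in> \<Sigma>" shows "c \<notin> S"
proof
  assume "c \<in> S"
  then have "star_of_leaf c = (c, legs)"
    using star_of_leaf_eq[OF star] center_in_star_verts[of c legs] by simp
  then obtain l where "l \<in> set legs" "c = last l"
    using star_of_leaf[OF \<open>c \<in> S\<close>] unfolding star_leaves_def by auto
  then show False
    using distinct_center_leg[OF star] leg_nonempty[OF star] by (metis distinct.simps(2) last_in_set)
qed

lemma leg_pred_notin_S:
  assumes star: "(c, legs) \<in> \<Sigma>" and l: "l \<in> set legs" and j: "j < length l"
  shows "(c # l) ! j \<notin> S"
proof (cases j)
  case 0
  then show ?thesis using center_notin_S[OF star] by simp
next
  case (Suc i)
  have "l ! i \<noteq> last l"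
    using distinct_center_leg[OF star l] leg_nonempty[OF star l] j Suc
    by (simp add: last_conv_nth nth_eq_iff_index_eq)
  then show ?thesis using leaf_is_last[OF star l, of "l ! i"] j Suc by auto
qed

lemma path_length: "p \<in> P \<Longrightarrow> 2 \<le> length p"
  using paths by blast

lemma path_nonempty: "p \<in> P \<Longrightarrow> p \<noteq> []"
  using path_length by fastforce

lemma path_distinct: "p \<in> P \<Longrightarrow> distinct p"
  using paths unfolding induced_path_def by blast

lemma path_edge_iff:
  "p \<in> P \<Longrightarrow> i < length p \<Longrightarrow> j < length p \<Longrightarrow> E (p ! i) (p ! j) \<longleftrightarrow> i + 1 = j \<or> j + 1 = i"
  using paths unfolding induced_path_def by blast

lemma path_subset_L: "p \<in> P \<Longrightarrow> set p \<subseteq> L"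
  using L_eq by auto

lemma path_unique: "p \<in> P \<Longrightarrow> q \<in> P \<Longrightarrow> x \<in> set p \<Longrightarrow> x \<in> set q \<Longrightarrow> p = q"
  using paths_apart by blast

lemma hd_in_S: "p \<in> P \<Longrightarrow> hd p \<in> S" and last_in_S: "p \<in> P \<Longrightarrow> last p \<in> S"
  using S_ends by auto

lemma path_meets_S: "p \<in> P \<Longrightarrow> x \<in> set p \<Longrightarrow> x \<in> S \<Longrightarrow> x = hd p \<or> x = last p"
  using S_ends path_unique path_nonempty by fastforce

lemma hd_ne_last_paths:
  assumes "p \<in> P" "q \<in> P" shows "hd p \<noteq> last q"
proof
  assume eq: "hd p = last q"
  then have "p = q" using path_unique assms path_nonempty by (metis hd_in_set last_in_set)
  moreover have "hd p \<noteq> last p"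
    using path_distinct[OF assms(1)] path_length[OF assms(1)]
    by (simp add: hd_conv_nth last_conv_nth nth_eq_iff_index_eq path_nonempty[OF assms(1)])
  ultimately show False using eq by simp
qed

lemma card_hd_last_images:
  assumes "A \<subseteq> P" "B \<subseteq> P" "finite A" "finite B"
  shows "card (hd ` A \<union> last ` B) = card A + card B"
proof -
  have "inj_on hd A" "inj_on last B"
    using assms(1,2) path_unique path_nonempty by (auto intro!: inj_onI) (metis hd_in_set last_in_set subsetD)+
  moreover have "hd ` A \<inter> last ` B = {}" using hd_ne_last_paths assms(1,2) by blast
  ultimately show ?thesis using assms(3,4) by (simp add: card_Un_disjoint card_image)
qed

lemma finite_paths: "finite P"
proof -
  have "inj_on set P"
    by (rule inj_onI) (metis path_unique path_nonempty hd_in_set)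
  moreover have "finite (set ` P)"
    using path_subset_L finite_V V_eq by (meson Pow_iff finite_Pow_iff finite_Un finite_subset image_subsetI)
  ultimately show ?thesis using finite_imageD by blast
qed

lemma finite_stars: "finite \<Sigma>"
proof -
  have "inj_on verts \<Sigma>"
    by (rule inj_onI) (metis star_unique center_in_star_verts)
  moreover have "finite (verts ` \<Sigma>)"
    using verts_subset_R finite_V V_eq by (meson Pow_iff finite_Pow_iff finite_Un finite_subset image_subsetI)
  ultimately show ?thesis using finite_imageD by blast
qed

lemma edge_in_star_or_path:
  assumes "E x y"
  shows "(\<exists>\<sigma>\<in>\<Sigma>. x \<in> verts \<sigma> \<and> y \<in> verts \<sigma>) \<or> (\<exists>p\<in>P. x \<in> set p \<and> y \<in> set p)"
proof -
  have "x \<in> L \<union> R" "y \<in> L \<union> R" using E_in_V[OF assms] V_eq by auto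
  moreover have "\<not> (x \<in> L - S \<and> y \<in> R - S)" "\<not> (y \<in> L - S \<and> x \<in> R - S)"
    using no_cross_edges assms E_sym by blast+
  ultimately have "(x \<in> R \<and> y \<in> R) \<or> (x \<in> L \<and> y \<in> L)" using S_eq by blast
  then show ?thesis
  proof
    assume "x \<in> R \<and> y \<in> R"
    then obtain \<sigma> \<tau> where "\<sigma> \<in> \<Sigma>" "\<tau> \<in> \<Sigma>" "x \<in> verts \<sigma>" "y \<in> verts \<tau>" using R_eq by auto
    then show ?thesis using stars_apart assms by metis
  next
    assume "x \<in> L \<and> y \<in> L"
    then obtain p q where "p \<in> P" "q \<in> P" "x \<in> set p" "y \<in> set q" using L_eq by auto
    then show ?thesis using paths_apart assms by metis
  qed
qed

lemma neighbours_center: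
  assumes star: "(c, legs) \<in> \<Sigma>"
  shows "{u\<in>V. E c u} = hd ` set legs"
proof
  show "hd ` set legs \<subseteq> {u\<in>V. E c u}"
    using edge_center_hd[OF star] E_in_V by auto
next
  show "{u\<in>V. E c u} \<subseteq> hd ` set legs"
  proof
    fix u assume "u \<in> {u\<in>V. E c u}"
    then have e: "E c u" by simp
    have "c \<notin> L" using center_notin_S[OF star] verts_subset_R[OF star] center_in_star_verts S_eq
      by fastforce
    then have "c \<notin> set p" if "p \<in> P" for p using path_subset_L that by blast
    then obtain \<sigma> where "\<sigma> \<in> \<Sigma>" "c \<in> verts \<sigma>" "u \<in> verts \<sigma>" using edge_in_star_or_path[OF e] by blast
    then have "u \<in> star_verts c legs"
      using star_unique[OF _ star] center_in_star_verts[of c legs] by fastforce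
    then obtain l i where l: "l \<in> set legs" "Suc i < length (c # l)"
      and cu: "{c, u} = {(c # l) ! i, (c # l) ! Suc i}"
      using star_edge_iff[OF star center_in_star_verts] e unfolding star_edge_def by blast
    have "c \<notin> set l" using distinct_center_leg[OF star l(1)] by simp
    then have "i = 0" using cu l(2) by (cases i) (auto simp: doubleton_eq_iff)
    then have "u = hd l" using cu E_irrefl[of c] e leg_nonempty[OF star l(1)]
      by (auto simp: hd_conv_nth doubleton_eq_iff)
    then show "u \<in> hd ` set legs" using l(1) by blast
  qed
qed

lemma degree_center: "(c, legs) \<in> \<Sigma> \<Longrightarrow> degree V E c = card (star_leaves legs)"
  unfolding degree_def star_leaves_def
  by (simp add: neighbours_center card_image inj_on_hd_legs inj_on_last_legs)

definition start_star :: "'a list \<Rightarrow> 'a \<times> 'a list list" where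
  "start_star p = star_of_leaf (hd p)"

definition end_star :: "'a list \<Rightarrow> 'a \<times> 'a list list" where
  "end_star p = star_of_leaf (last p)"

sublocale contracted: multigraph P start_star end_star
  by unfold_locales (rule finite_paths)

lemma start_end_star_in_stars: "p \<in> P \<Longrightarrow> start_star p \<in> \<Sigma> \<and> end_star p \<in> \<Sigma>"
  unfolding start_star_def end_star_def using star_of_leaf hd_in_S last_in_S by blast

lemma mdegree_le_degree_center:
  assumes "\<sigma> \<in> \<Sigma>" shows "contracted.mdegree \<sigma> \<le> degree V E (fst \<sigma>)"
proof -
  let ?A = "{p\<in>P. start_star p = \<sigma>}" and ?B = "{p\<in>P. end_star p = \<sigma>}"
  have "hd ` ?A \<union> last ` ?B \<subseteq> star_leaves (snd \<sigma>)"
    unfolding start_star_def end_star_def using star_of_leaf hd_in_S last_in_S by blast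
  then have "card (hd ` ?A \<union> last ` ?B) \<le> card (star_leaves (snd \<sigma>))"
    by (rule card_mono[rotated]) (simp add: star_leaves_def)
  then have "card ?A + card ?B \<le> degree V E (fst \<sigma>)"
    using card_hd_last_images[of ?A ?B] finite_paths degree_center[of "fst \<sigma>" "snd \<sigma>"] assms by simp
  moreover have "contracted.mdegree \<sigma> \<le> card ?A + card ?B"
  proof -
    have "{p\<in>P. start_star p = \<sigma> \<or> end_star p = \<sigma>} = ?A \<union> ?B" by blast
    then show ?thesis unfolding contracted.mdegree_def by (simp add: card_Un_le)
  qed
  ultimately show ?thesis by linarith
qed

lemma sum_degree_centers: "(\<Sum>\<sigma>\<in>\<Sigma>. degree V E (fst \<sigma>)) = card S"
proof -
  have "(\<Sum>\<sigma>\<in>\<Sigma>. degree V E (fst \<sigma>)) = (\<Sum>\<sigma>\<in>\<Sigma>. card (star_leaves (snd \<sigma>)))"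
    using degree_center by (intro sum.cong) auto
  also have "\<dots> = card (\<Union>\<sigma>\<in>\<Sigma>. star_leaves (snd \<sigma>))"
  proof (rule card_UN_disjoint[symmetric])
    show "\<forall>\<sigma>\<in>\<Sigma>. \<forall>\<tau>\<in>\<Sigma>. \<sigma> \<noteq> \<tau> \<longrightarrow> star_leaves (snd \<sigma>) \<inter> star_leaves (snd \<tau>) = {}"
    proof (intro ballI impI)
      fix \<sigma> \<tau> assume "\<sigma> \<in> \<Sigma>" "\<tau> \<in> \<Sigma>" "\<sigma> \<noteq> \<tau>"
      moreover have "star_leaves (snd \<sigma>) \<subseteq> verts \<sigma>" "star_leaves (snd \<tau>) \<subseteq> verts \<tau>"
        using leaves_subset_verts[of "fst \<sigma>" "snd \<sigma>"] leaves_subset_verts[of "fst \<tau>" "snd \<tau>"]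
          \<open>\<sigma> \<in> \<Sigma>\<close> \<open>\<tau> \<in> \<Sigma>\<close> by auto
      ultimately show "star_leaves (snd \<sigma>) \<inter> star_leaves (snd \<tau>) = {}" using stars_apart by blast
    qed
  qed (simp_all add: finite_stars star_leaves_def)
  also have "\<dots> = card S" using S_leaves by simp
  finally show ?thesis .
qed

lemma card_S: "card S = 2 * card P"
proof -
  have "S = hd ` P \<union> last ` P" using S_ends by auto
  then show ?thesis using card_hd_last_images[of P P] finite_paths by simp
qed

lemma inner_edges_stars: "contracted.inner_edges \<Sigma> = card P"
proof -
  have "{p\<in>P. start_star p \<in> \<Sigma> \<and> end_star p \<in> \<Sigma>} = P" using start_end_star_in_stars by blast
  then show ?thesis unfolding contracted.inner_edges_def by simp
qed

definition paths_within :: "('a \<times> 'a list list) set \<Rightarrow> 'a list set" where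
  "paths_within Q = {p\<in>P. start_star p \<in> Q \<and> end_star p \<in> Q}"

definition used_leaves :: "('a \<times> 'a list list) set \<Rightarrow> 'a set" where
  "used_leaves Q = (\<Union>p\<in>paths_within Q. {hd p, last p})"

text \<open>The subgraph of \<open>H\<close> realising the submultigraph induced by \<open>Q\<close>: the centres of the stars
  in \<open>Q\<close>, the paths between them, and the legs leading to the ends of these paths.\<close>
definition lifted :: "('a \<times> 'a list list) set \<Rightarrow> 'a set" where
  "lifted Q = fst ` Q \<union> (\<Union>\<sigma>\<in>Q. \<Union>l\<in>{l \<in> set (snd \<sigma>). last l \<in> used_leaves Q}. set l) \<union>
     (\<Union>p\<in>paths_within Q. set p)"

lemma center_in_lifted: "(c, legs) \<in> Q \<Longrightarrow> c \<in> lifted Q"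
  unfolding lifted_def by force

lemma leg_subset_lifted: "(c, legs) \<in> Q \<Longrightarrow> l \<in> set legs \<Longrightarrow> last l \<in> used_leaves Q \<Longrightarrow> set l \<subseteq> lifted Q"
  unfolding lifted_def by force

lemma path_subset_lifted: "p \<in> paths_within Q \<Longrightarrow> set p \<subseteq> lifted Q"
  unfolding lifted_def by blast

lemma used_leaf_star: "s \<in> used_leaves Q \<Longrightarrow> star_of_leaf s \<in> Q \<and> s \<in> S"
  unfolding used_leaves_def paths_within_def start_star_def end_star_def
  using hd_in_S last_in_S by auto

lemma used_leaf_leg:
  assumes "s \<in> used_leaves Q"
  shows "\<exists>l\<in>set (snd (star_of_leaf s)). last l = s \<and> set l \<subseteq> lifted Q"
proof -
  obtain l where "l \<in> set (snd (star_of_leaf s))" "last l = s"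
    using star_of_leaf used_leaf_star[OF assms] unfolding star_leaves_def by auto
  then show ?thesis
    using leg_subset_lifted[of "fst (star_of_leaf s)" "snd (star_of_leaf s)"] used_leaf_star[OF assms] assms
    by auto
qed

lemma used_leaf_path_neighbour:
  assumes "s \<in> used_leaves Q"
  shows "\<exists>w\<in>lifted Q. w \<in> L \<and> E s w"
proof -
  obtain p where p: "p \<in> paths_within Q" and s: "s = hd p \<or> s = last p"
    using assms unfolding used_leaves_def by blast
  have pP: "p \<in> P" using p unfolding paths_within_def by blast
  have len: "2 \<le> length p" using path_length[OF pP] .
  have "E (hd p) (p ! 1)" "E (last p) (p ! (length p - 2))"
    using path_edge_iff[OF pP, of 0 1] path_edge_iff[OF pP, of "length p - 1" "length p - 2"] len
    by (auto simp: hd_conv_nth last_conv_nth path_nonempty[OF pP])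
  moreover have "p ! 1 \<in> set p" "p ! (length p - 2) \<in> set p" using len by auto
  ultimately show ?thesis
    using s path_subset_lifted[OF p] path_subset_L[OF pP] by blast
qed

text \<open>The neighbour of a leg vertex towards the centre lies in \<open>R - S\<close>, while the next vertex
  beyond a leaf lies on a path, hence in \<open>L\<close>: so the two neighbours found are distinct.\<close>
lemma leg_vertex_two_neighbours:
  assumes "Q \<subseteq> \<Sigma>" and cQ: "(c, legs) \<in> Q" and l: "l \<in> set legs"
    and used: "last l \<in> used_leaves Q" and j: "j < length l"
  shows "two_neighbours_in E (lifted Q) (l ! j)"
proof -
  have star: "(c, legs) \<in> \<Sigma>" using assms(1) cQ by blast
  have lQ: "set l \<subseteq> lifted Q" using leg_subset_lifted[OF cQ l used] .
  define u where "u = (c # l) ! j"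
  have uQ: "u \<in> lifted Q"
    using center_in_lifted[OF cQ] lQ j unfolding u_def by (cases j) auto
  have Eu: "E (l ! j) u" using E_sym[OF edge_along_leg[OF star l j]] unfolding u_def .
  have "star_verts c legs \<subseteq> R" using verts_subset_R[OF star] by simp
  then have "u \<in> R" using leg_pred_in_verts[OF star l j] unfolding u_def by (rule subsetD)
  moreover have "u \<notin> S" using leg_pred_notin_S[OF star l j] unfolding u_def .
  ultimately have uRS: "u \<in> R - S" by blast
  show ?thesis
  proof (cases "Suc j < length l")
    case True
    have "(c # l) ! j \<noteq> (c # l) ! Suc (Suc j)"
      using distinct_center_leg[OF star l] True by (subst nth_eq_iff_index_eq) auto
    then have "u \<noteq> l ! Suc j" unfolding u_def by simp
    moreover have "E (l ! j) (l ! Suc j)" using edge_along_leg[OF star l True] by simp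
    ultimately show ?thesis using uQ Eu lQ True by (meson nth_mem subsetD)
  next
    case False
    then have "j = length l - 1" "l \<noteq> []" using j by auto
    then have "l ! j = last l" by (simp add: last_conv_nth)
    moreover obtain w where "w \<in> lifted Q" "w \<in> L" "E (last l) w"
      using used_leaf_path_neighbour[OF used] by blast
    moreover have "u \<noteq> w" using uRS \<open>w \<in> L\<close> S_eq by blast
    ultimately show ?thesis using uQ Eu by metis
  qed
qed

lemma used_leaf_two_neighbours:
  assumes "Q \<subseteq> \<Sigma>" and "s \<in> used_leaves Q"
  shows "two_neighbours_in E (lifted Q) s"
proof -
  obtain l where l: "l \<in> set (snd (star_of_leaf s))" and s: "last l = s"
    using used_leaf_leg[OF assms(2)] by blast
  have star: "(fst (star_of_leaf s), snd (star_of_leaf s)) \<in> Q"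
    using used_leaf_star[OF assms(2)] by simp
  have "l \<noteq> []" using leg_nonempty[of "fst (star_of_leaf s)" "snd (star_of_leaf s)" l] l star assms(1)
    by blast
  then show ?thesis
    using leg_vertex_two_neighbours[OF assms(1) star l, of "length l - 1"] s assms(2)
    by (simp add: last_conv_nth)
qed

lemma center_two_neighbours:
  assumes Q: "Q \<subseteq> \<Sigma>" and cQ: "(c, legs) \<in> Q" and deg: "2 \<le> contracted.mdegree_in Q (c, legs)"
  shows "two_neighbours_in E (lifted Q) c"
proof -
  have star: "(c, legs) \<in> \<Sigma>" using Q cQ by blast
  let ?A = "{p\<in>P. start_star p = (c, legs) \<and> end_star p \<in> Q}"
    and ?B = "{p\<in>P. end_star p = (c, legs) \<and> start_star p \<in> Q}"
  let ?U = "{s \<in> used_leaves Q. star_of_leaf s = (c, legs)}"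
  have "hd p \<in> ?U" if "p \<in> ?A" for p
  proof -
    have "p \<in> paths_within Q" using that cQ unfolding paths_within_def by auto
    then show ?thesis using that unfolding used_leaves_def start_star_def by auto
  qed
  moreover have "last p \<in> ?U" if "p \<in> ?B" for p
  proof -
    have "p \<in> paths_within Q" using that cQ unfolding paths_within_def by auto
    then show ?thesis using that unfolding used_leaves_def end_star_def by auto
  qed
  ultimately have "hd ` ?A \<union> last ` ?B \<subseteq> ?U" by blast
  moreover have "finite ?U"
    using finite_paths unfolding used_leaves_def paths_within_def by simp
  ultimately have "card (hd ` ?A \<union> last ` ?B) \<le> card ?U" by (rule card_mono[rotated])
  then have "card ?A + card ?B \<le> card ?U"
    using card_hd_last_images[of ?A ?B] finite_paths by simp
  then have "\<not> card ?U \<le> Suc 0" using deg unfolding contracted.mdegree_in_def by simp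
  then obtain s1 s2 where s: "s1 \<in> ?U" "s2 \<in> ?U" "s1 \<noteq> s2"
    using card_le_Suc0_iff_eq[OF \<open>finite ?U\<close>] by blast
  obtain l1 l2 where l: "l1 \<in> set legs" "l2 \<in> set legs" and "last l1 = s1" "last l2 = s2"
    and "set l1 \<subseteq> lifted Q" "set l2 \<subseteq> lifted Q"
    using used_leaf_leg[of s1 Q] used_leaf_leg[of s2 Q] s by auto
  moreover have "hd l1 \<noteq> hd l2" using inj_on_hd_legs[OF star] l s \<open>last l1 = s1\<close> \<open>last l2 = s2\<close>
    by (metis inj_onD)
  ultimately show ?thesis
    using edge_center_hd[OF star] leg_nonempty[OF star] by (metis hd_in_set subsetD)
qed

lemma path_vertex_two_neighbours:
  assumes Q: "Q \<subseteq> \<Sigma>" and p: "p \<in> paths_within Q" and j: "j < length p"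
  shows "two_neighbours_in E (lifted Q) (p ! j)"
proof -
  have pP: "p \<in> P" using p unfolding paths_within_def by blast
  have ends: "hd p \<in> used_leaves Q" "last p \<in> used_leaves Q"
    using p unfolding used_leaves_def by blast+
  consider "j = 0" | "j = length p - 1" | "0 < j" "Suc j < length p" using j by linarith
  then show ?thesis
  proof cases
    case 1
    then show ?thesis using used_leaf_two_neighbours[OF Q ends(1)] path_nonempty[OF pP]
      by (simp add: hd_conv_nth)
  next
    case 2
    then show ?thesis using used_leaf_two_neighbours[OF Q ends(2)] path_nonempty[OF pP]
      by (simp add: last_conv_nth)
  next
    case 3
    have "E (p ! j) (p ! (j - 1))" "E (p ! j) (p ! Suc j)" using path_edge_iff[OF pP] 3 by auto
    moreover have "p ! (j - 1) \<noteq> p ! Suc j" using path_distinct[OF pP] 3 by (simp add: nth_eq_iff_index_eq)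
    moreover have "p ! (j - 1) \<in> lifted Q" "p ! Suc j \<in> lifted Q"
      using path_subset_lifted[OF p] 3 by auto
    ultimately show ?thesis by blast
  qed
qed

lemma lifted_min_degree_two:
  assumes Q: "Q \<subseteq> \<Sigma>" and deg: "\<forall>\<sigma>\<in>Q. 2 \<le> contracted.mdegree_in Q \<sigma>" and v: "v \<in> lifted Q"
  shows "two_neighbours_in E (lifted Q) v"
proof -
  consider (center) \<sigma> where "\<sigma> \<in> Q" "v = fst \<sigma>"
    | (leg) \<sigma> l where "\<sigma> \<in> Q" "l \<in> set (snd \<sigma>)" "last l \<in> used_leaves Q" "v \<in> set l"
    | (path) p where "p \<in> paths_within Q" "v \<in> set p"
    using v unfolding lifted_def by blast
  then show ?thesis
  proof cases
    case center
    then show ?thesis using center_two_neighbours[OF Q, of "fst \<sigma>" "snd \<sigma>"] deg by simp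
  next
    case leg
    then show ?thesis
      using leg_vertex_two_neighbours[OF Q, of "fst \<sigma>" "snd \<sigma>" l] by (auto simp: in_set_conv_nth)
  next
    case path
    then show ?thesis using path_vertex_two_neighbours[OF Q] by (auto simp: in_set_conv_nth)
  qed
qed

lemma lifted_subset_V: "Q \<subseteq> \<Sigma> \<Longrightarrow> lifted Q \<subseteq> V"
  unfolding lifted_def paths_within_def
  using verts_subset_R center_in_star_verts leg_subset_star_verts path_subset_L V_eq
  by fastforce

lemma lifted_has_cycle:
  assumes "Q \<subseteq> \<Sigma>" and "Q \<noteq> {}" and "\<forall>\<sigma>\<in>Q. 2 \<le> contracted.mdegree_in Q \<sigma>"
  shows "\<exists>C \<subseteq> lifted Q. is_cycle E C"
proof (rule min_degree_two_has_cycle)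
  show "finite (lifted Q)" using lifted_subset_V[OF assms(1)] finite_V finite_subset by blast
  show "lifted Q \<noteq> {}" using assms(2) unfolding lifted_def by blast
qed (use E_irrefl lifted_min_degree_two[OF assms(1,3)] in auto)

text \<open>Lifts of disjoint sets of stars are disjoint and have no edges between them: every vertex
  and every edge of \<open>H\<close> belongs to a single star or a single path, and the lift of \<open>Q\<close> meets a
  star or path only if it belongs to \<open>Q\<close> or runs within \<open>Q\<close>.\<close>
lemma star_meeting_lifted:
  assumes Q: "Q \<subseteq> \<Sigma>" and x: "x \<in> lifted Q" and \<sigma>: "\<sigma> \<in> \<Sigma>" "x \<in> verts \<sigma>"
  shows "\<sigma> \<in> Q"
proof -
  consider (center) \<tau> where "\<tau> \<in> Q" "x = fst \<tau>"
    | (leg) \<tau> l where "\<tau> \<in> Q" "l \<in> set (snd \<tau>)" "x \<in> set l"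
    | (path) p where "p \<in> paths_within Q" "x \<in> set p"
    using x unfolding lifted_def by blast
  then show ?thesis
  proof cases
    case center
    then have "\<tau> \<in> \<Sigma>" "x \<in> verts \<tau>" using Q center_in_star_verts by auto
    then show ?thesis using star_unique[OF \<sigma>(1) _ \<sigma>(2)] center(1) by blast
  next
    case leg
    then have "\<tau> \<in> \<Sigma>" "x \<in> verts \<tau>" using Q leg_subset_star_verts[of l "snd \<tau>" "fst \<tau>"] by auto
    then show ?thesis using star_unique[OF \<sigma>(1) _ \<sigma>(2)] leg(1) by blast
  next
    case path
    then have p: "p \<in> P" "start_star p \<in> Q" "end_star p \<in> Q" unfolding paths_within_def by auto
    have "x \<in> S" using path_subset_L[OF p(1)] path(2) verts_subset_R[OF \<sigma>(1)] \<sigma>(2) S_eq by blast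
    then have "star_of_leaf x = \<sigma>" using star_of_leaf_eq[OF \<sigma>] by blast
    moreover have "x = hd p \<or> x = last p" using path_meets_S[OF p(1) path(2) \<open>x \<in> S\<close>] .
    ultimately show ?thesis using p unfolding start_star_def end_star_def by auto
  qed
qed

lemma path_meeting_lifted:
  assumes Q: "Q \<subseteq> \<Sigma>" and x: "x \<in> lifted Q" and p: "p \<in> P" "x \<in> set p"
  shows "p \<in> paths_within Q"
proof -
  have xL: "x \<in> L" using path_subset_L[OF p(1)] p(2) by blast
  consider (center) \<tau> where "\<tau> \<in> Q" "x = fst \<tau>"
    | (leg) \<tau> l where "\<tau> \<in> Q" "l \<in> set (snd \<tau>)" "last l \<in> used_leaves Q" "x \<in> set l"
    | (path) q where "q \<in> paths_within Q" "x \<in> set q"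
    using x unfolding lifted_def by blast
  then show ?thesis
  proof cases
    case center
    then have "x \<in> S"
      using xL verts_subset_R[of \<tau>] Q center_in_star_verts[of "fst \<tau>" "snd \<tau>"] S_eq by blast
    then show ?thesis using center_notin_S[of "fst \<tau>" "snd \<tau>"] center Q by auto
  next
    case leg
    have star: "(fst \<tau>, snd \<tau>) \<in> \<Sigma>" using leg(1) Q by auto
    have "x \<in> S"
      using xL verts_subset_R[of \<tau>] leg Q leg_subset_star_verts[of l "snd \<tau>" "fst \<tau>"] S_eq by blast
    then have "x \<in> used_leaves Q" using leaf_is_last[OF star leg(2,4)] leg(3) by simp
    then obtain q where q: "q \<in> paths_within Q" "x = hd q \<or> x = last q"
      unfolding used_leaves_def by blast
    have "q \<in> P" using q(1) unfolding paths_within_def by blast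
    then have "q = p" using path_unique p q(2) path_nonempty by (metis hd_in_set last_in_set)
    then show ?thesis using q(1) by simp
  next
    case path
    have "q \<in> P" using path(1) unfolding paths_within_def by blast
    then have "q = p" using path_unique p path(2) by blast
    then show ?thesis using path(1) by simp
  qed
qed

lemma lifted_apart:
  assumes Q1: "Q1 \<subseteq> \<Sigma>" and Q2: "Q2 \<subseteq> \<Sigma>" and disj: "Q1 \<inter> Q2 = {}"
    and x: "x \<in> lifted Q1" and y: "y \<in> lifted Q2"
  shows "x \<noteq> y \<and> \<not> E x y"
proof -
  have shared_star: False if "\<sigma> \<in> \<Sigma>" "x \<in> verts \<sigma>" "y \<in> verts \<sigma>" for \<sigma>
    using star_meeting_lifted[OF Q1 x that(1,2)] star_meeting_lifted[OF Q2 y that(1,3)] disj by blast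
  have shared_path: False if "p \<in> P" "x \<in> set p" "y \<in> set p" for p
    using path_meeting_lifted[OF Q1 x that(1,2)] path_meeting_lifted[OF Q2 y that(1,3)] disj
    unfolding paths_within_def by blast
  have "x \<in> L \<union> R" using lifted_subset_V[OF Q1] x V_eq by blast
  then have "x \<noteq> y" using shared_star shared_path L_eq R_eq by blast
  moreover have "\<not> E x y" using edge_in_star_or_path shared_star shared_path by blast
  ultimately show ?thesis ..
qed

theorem card_paths_le:
  assumes "O_free k V E"
  shows "card P \<le> card \<Sigma> + (k - 1) * (2 * card \<Sigma> + 2 * Max ((\<lambda>\<sigma>. degree V E (fst \<sigma>)) ` \<Sigma>))"
proof (rule ccontr)
  define D where "D = Max ((\<lambda>\<sigma>. degree V E (fst \<sigma>)) ` \<Sigma>)"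
  assume "\<not> ?thesis"
  then have many: "card \<Sigma> + (k - 1) * (2 * card \<Sigma> + 2 * D) < contracted.inner_edges \<Sigma>"
    using inner_edges_stars D_def by simp
  have deg: "\<forall>\<sigma>\<in>\<Sigma>. contracted.mdegree \<sigma> \<le> D"
  proof
    fix \<sigma> assume "\<sigma> \<in> \<Sigma>"
    then have "degree V E (fst \<sigma>) \<le> D" unfolding D_def using finite_stars by simp
    then show "contracted.mdegree \<sigma> \<le> D" using mdegree_le_degree_center[OF \<open>\<sigma> \<in> \<Sigma>\<close>] by linarith
  qed
  from contracted.disjoint_min_degree_two_subsets[OF finite_stars deg many]
  obtain Qs where Qs: "\<forall>i<k. Qs i \<subseteq> \<Sigma> \<and> Qs i \<noteq> {} \<and> (\<forall>\<sigma>\<in>Qs i. 2 \<le> contracted.mdegree_in (Qs i) \<sigma>)"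
    and disj: "\<forall>i<k. \<forall>j<k. i \<noteq> j \<longrightarrow> Qs i \<inter> Qs j = {}"
    by blast
  have Qs_stars: "Qs i \<subseteq> \<Sigma>" if "i < k" for i using Qs that by blast
  have "\<exists>C. i < k \<longrightarrow> C \<subseteq> lifted (Qs i) \<and> is_cycle E C" for i
  proof (cases "i < k")
    case True
    then have "Qs i \<noteq> {}" and "\<forall>\<sigma>\<in>Qs i. 2 \<le> contracted.mdegree_in (Qs i) \<sigma>" using Qs by auto
    then obtain C where "C \<subseteq> lifted (Qs i)" "is_cycle E C"
      using lifted_has_cycle[OF Qs_stars[OF True]] by blast
    then show ?thesis by blast
  qed simp
  then obtain Cs where Cs: "\<And>i. i < k \<Longrightarrow> Cs i \<subseteq> lifted (Qs i) \<and> is_cycle E (Cs i)" by metis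
  have "\<forall>i<k. Cs i \<subseteq> V \<and> is_cycle E (Cs i)"
    using Cs lifted_subset_V[OF Qs_stars] by blast
  moreover have "\<forall>i<k. \<forall>j<k. i \<noteq> j \<longrightarrow> Cs i \<inter> Cs j = {} \<and> (\<forall>x\<in>Cs i. \<forall>y\<in>Cs j. \<not> E x y)"
  proof (intro allI impI)
    fix i j assume ij: "i < k" "j < k" "i \<noteq> j"
    then have "Qs i \<inter> Qs j = {}" using disj by blast
    then show "Cs i \<inter> Cs j = {} \<and> (\<forall>x\<in>Cs i. \<forall>y\<in>Cs j. \<not> E x y)"
      using lifted_apart[OF Qs_stars[OF ij(1)] Qs_stars[OF ij(2)]] Cs[OF ij(1)] Cs[OF ij(2)] by blast
  qed
  ultimately have "\<exists>Cs :: nat \<Rightarrow> 'a set. (\<forall>i<k. Cs i \<subseteq> V \<and> is_cycle E (Cs i)) \<and>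
      (\<forall>i<k. \<forall>j<k. i \<noteq> j \<longrightarrow> Cs i \<inter> Cs j = {} \<and> (\<forall>x\<in>Cs i. \<forall>y\<in>Cs j. \<not> E x y))"
    by (intro exI[of _ Cs] conjI)
  then show False using assms unfolding O_free_def by blast
qed

end

lemma ln_ge_half: "2 \<le> x \<Longrightarrow> 1/2 \<le> ln (x :: real)"
proof -
  assume x: "2 \<le> x"
  have "ln (1/x) \<le> 1/x - 1" using x by (intro ln_le_minus_one) simp
  moreover have "1/x \<le> 1/2" using x by simp
  moreover have "ln (1/x) = - ln x" using x by (simp add: ln_div)
  ultimately show ?thesis by linarith
qed

lemma degree_bound_from_counts:
  fixes k n d s :: nat
  assumes k: "2 \<le> k" and n: "0 < n" and upper: "s \<le> 4 * k * n + 4 * k * d"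
    and lower: "12 * real k * ln (real k) \<le> real s / real n"
  shows "(1/12) * real s / (real k)^2 \<le> real d"
proof -
  have "6 * real k * real n \<le> 12 * real k * ln (real k) * real n"
    using ln_ge_half[of "real k"] k by (simp add: mult_right_mono)
  also have "\<dots> \<le> real s" using lower n by (simp add: le_divide_eq)
  moreover have "real s \<le> 4 * real k * real n + 4 * real k * real d"
    using upper by (metis of_nat_add of_nat_le_iff of_nat_mult of_nat_numeral)
  ultimately have "real s \<le> 12 * real k * real d" by linarith
  also have "\<dots> \<le> 12 * (real k)^2 * real d" using k by (simp add: power2_eq_square mult_right_mono)
  finally show ?thesis using k by (simp add: field_simps)
qed

theorem (in paths_and_stars) max_degree_lower_bound:
  assumes k: "2 \<le> k" and "O_free k V E" and "\<Sigma> \<noteq> {}"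
    and avg: "12 * real k * ln (real k) \<le> (\<Sum>(ctr, legs)\<in>\<Sigma>. real (degree V E ctr)) / real (card \<Sigma>)"
  shows "\<exists>v\<in>V. (1/12) * real (card S) / (real k)^2 \<le> real (degree V E v)"
proof -
  define D where "D = Max ((\<lambda>\<sigma>. degree V E (fst \<sigma>)) ` \<Sigma>)"
  have "D \<in> (\<lambda>\<sigma>. degree V E (fst \<sigma>)) ` \<Sigma>"
    unfolding D_def using finite_stars \<open>\<Sigma> \<noteq> {}\<close> by (intro Max_in) auto
  then obtain \<sigma> where \<sigma>: "\<sigma> \<in> \<Sigma>" and "degree V E (fst \<sigma>) = D" by blast
  moreover have "fst \<sigma> \<in> V"
    using verts_subset_R[OF \<sigma>] center_in_star_verts[of "fst \<sigma>" "snd \<sigma>"] V_eq by blast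
  moreover have "card S \<le> 4 * k * card \<Sigma> + 4 * k * D"
  proof -
    have "card S \<le> 2 * (card \<Sigma> + (k - 1) * (2 * card \<Sigma> + 2 * D))"
      using card_S card_paths_le[OF \<open>O_free k V E\<close>] unfolding D_def by simp
    also have "\<dots> \<le> 4 * k * card \<Sigma> + 4 * k * D"
      using k by (cases k) (auto simp: algebra_simps)
    finally show ?thesis .
  qed
  moreover have "(\<Sum>(ctr, legs)\<in>\<Sigma>. real (degree V E ctr)) = real (card S)"
    using sum_degree_centers by (simp add: case_prod_beta flip: of_nat_sum)
  moreover have "0 < card \<Sigma>" using finite_stars \<open>\<Sigma> \<noteq> {}\<close> by (simp add: card_gt_0_iff)
  ultimately show ?thesis using degree_bound_from_counts[OF k] avg by metis
qed

theorem mainTheorem18: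
  "\<exists>c c' :: real. c > 0 \<and> c' > 0 \<and>
    (\<forall>(k :: nat) (V :: nat set) E L R S \<Sigma>.
      k \<ge> 2 \<and> graph V E \<and> O_free k V E \<and>
      V = L \<union> R \<and> S = L \<inter> R \<and>
      (\<forall>x \<in> S. \<forall>y \<in> S. \<not> E x y) \<and>
      (\<forall>x \<in> L - S. \<forall>y \<in> R - S. \<not> E x y) \<and>
      paths_decomp E L S \<and>
      stars_decomp E R S \<Sigma> \<and> \<Sigma> \<noteq> {} \<and>
      (\<Sum>(ctr, legs) \<in> \<Sigma>. real (degree V E ctr)) / real (card \<Sigma>)
          \<ge> 4 * c * real k * ln (real k)
      \<longrightarrow> (\<exists>v \<in> V. real (degree V E v) \<ge> c' * real (card S) / (real k)^2))"
proof (rule exI[of _ 3], rule exI[of _ "1/12"], intro conjI allI impI)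
  fix k :: nat and V :: "nat set" and E L R S \<Sigma>
  assume H: "k \<ge> 2 \<and> graph V E \<and> O_free k V E \<and> V = L \<union> R \<and> S = L \<inter> R \<and>
    (\<forall>x \<in> S. \<forall>y \<in> S. \<not> E x y) \<and> (\<forall>x \<in> L - S. \<forall>y \<in> R - S. \<not> E x y) \<and>
    paths_decomp E L S \<and> stars_decomp E R S \<Sigma> \<and> \<Sigma> \<noteq> {} \<and>
    (\<Sum>(ctr, legs) \<in> \<Sigma>. real (degree V E ctr)) / real (card \<Sigma>) \<ge> 4 * 3 * real k * ln (real k)"
  then have "4 * 3 * real k * ln (real k) \<le> (\<Sum>(ctr, legs) \<in> \<Sigma>. real (degree V E ctr)) / real (card \<Sigma>)"
    by blast
  then have avg: "12 * real k * ln (real k) \<le> (\<Sum>(ctr, legs) \<in> \<Sigma>. real (degree V E ctr)) / real (card \<Sigma>)"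
    by simp
  have "paths_decomp E L S" using H by blast
  then obtain P where "\<forall>xs\<in>P. 2 \<le> length xs \<and> induced_path E xs" "L = (\<Union>xs\<in>P. set xs)"
    "\<forall>xs\<in>P. \<forall>ys\<in>P. xs \<noteq> ys \<longrightarrow> set xs \<inter> set ys = {} \<and> (\<forall>x\<in>set xs. \<forall>y\<in>set ys. \<not> E x y)"
    "S = (\<Union>xs\<in>P. {hd xs, last xs})"
    unfolding paths_decomp_def by blast
  moreover have "graph V E" "V = L \<union> R" "S = L \<inter> R" "\<forall>x \<in> L - S. \<forall>y \<in> R - S. \<not> E x y"
    "stars_decomp E R S \<Sigma>"
    using H by blast+
  ultimately interpret paths_and_stars V E L R S P \<Sigma>
    by unfold_locales
  show "\<exists>v \<in> V. real (degree V E v) \<ge> 1/12 * real (card S) / (real k)^2"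
    using max_degree_lower_bound[OF _ _ _ avg] H by blast
qed (simp_all)

end
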